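(* Let $A$ be a graded Frobenius algebra of Gorenstein parameter $-\ell$. Then for every $i\in\mathbb{N}$, $D(A_{\ge i}(i))\cong A(\ell-i)/A(\ell-i)_{\ge1}$ as graded right $A$-modules.
   Context: Graded algebras are $\mathbb{N}$-graded algebras over an algebraically closed field $k$. $M(n)_m=M_{n+m}$, $M_{\ge n}=\bigoplus_{m\ge n}M_m$, $D(M)=\bigoplus_m\mathrm{Hom}_k(M_{-m},k)$ (the dual of a graded left module is a graded right module). $A_{\ge i}$ is regarded as a graded left $A$-module. $A$ is graded Frobenius of Gorenstein parameter $-\ell$ if it is locally finite and $D(A)\cong A(\ell)$ as graded right $A$-modules. *)

theory Defs
  imports Main "HOL-Computational_Algebra.Polynomial"
begin

definition alg_closed :: "'k::field itself \<Rightarrow> bool" where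
  "alg_closed _ \<longleftrightarrow> (\<forall>p::'k poly. degree p \<ge> 1 \<longrightarrow> (\<exists>x. poly p x = 0))"

text \<open>The algebra A is the type 'a (an associative unital ring), with a
  k-scalar multiplication smul making it a k-algebra; Ag n is the degree-n
  component A_n.\<close>

definition graded_algebra ::
  "('k::field \<Rightarrow> 'a::ring_1 \<Rightarrow> 'a) \<Rightarrow> (nat \<Rightarrow> 'a set) \<Rightarrow> bool" where
  "graded_algebra smul Ag \<longleftrightarrow>
     Vector_Spaces.vector_space smul \<and>
     (\<forall>c x y. smul c (x * y) = smul c x * y) \<and>
     (\<forall>c x y. smul c (x * y) = x * smul c y) \<and>
     (\<forall>n. module.subspace smul (Ag n)) \<and>
     (\<forall>x. \<exists>!f. (\<forall>n. f n \<in> Ag n) \<and> finite {n. f n \<noteq> 0} \<and>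
              x = (\<Sum>n\<in>{n. f n \<noteq> 0}. f n)) \<and>
     (\<forall>m n x y. x \<in> Ag m \<longrightarrow> y \<in> Ag n \<longrightarrow> x * y \<in> Ag (m + n)) \<and>
     1 \<in> Ag 0"

definition locally_finite ::
  "('k::field \<Rightarrow> 'a::ring_1 \<Rightarrow> 'a) \<Rightarrow> (nat \<Rightarrow> 'a set) \<Rightarrow> bool" where
  "locally_finite smul Ag \<longleftrightarrow>
     (\<forall>n. \<exists>B. finite B \<and> B \<subseteq> Ag n \<and> Ag n \<subseteq> module.span smul B)"

definition Agi :: "(nat \<Rightarrow> 'a::zero set) \<Rightarrow> int \<Rightarrow> 'a set" where
  "Agi Ag d = (if d < 0 then {0} else Ag (nat d))"

text \<open>A graded A-module M = (direct sum over d of M_d) is represented by its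
  components gcomp M d (subsets of an ambient type 'm), the k-vector space
  operations on each component, and the action of homogeneous elements:
  gact M d n x a is the action of a \<in> A_n on x \<in> M_d (landing in M_(d+n));
  for a left module it is a.x, for a right module it is x.a.\<close>

record ('k, 'a, 'm) gmod =
  gcomp :: "int \<Rightarrow> 'm set"
  gadd  :: "int \<Rightarrow> 'm \<Rightarrow> 'm \<Rightarrow> 'm"
  gzero :: "int \<Rightarrow> 'm"
  gsmul :: "int \<Rightarrow> 'k \<Rightarrow> 'm \<Rightarrow> 'm"
  gact  :: "int \<Rightarrow> nat \<Rightarrow> 'm \<Rightarrow> 'a \<Rightarrow> 'm"

definition regular_left ::
  "('k::field \<Rightarrow> 'a::ring_1 \<Rightarrow> 'a) \<Rightarrow> (nat \<Rightarrow> 'a set) \<Rightarrow> ('k, 'a, 'a) gmod" where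
  "regular_left smul Ag =
     \<lparr> gcomp = Agi Ag, gadd = (\<lambda>d x y. x + y), gzero = (\<lambda>d. 0),
       gsmul = (\<lambda>d. smul), gact = (\<lambda>d n x a. a * x) \<rparr>"

definition regular_right ::
  "('k::field \<Rightarrow> 'a::ring_1 \<Rightarrow> 'a) \<Rightarrow> (nat \<Rightarrow> 'a set) \<Rightarrow> ('k, 'a, 'a) gmod" where
  "regular_right smul Ag =
     \<lparr> gcomp = Agi Ag, gadd = (\<lambda>d x y. x + y), gzero = (\<lambda>d. 0),
       gsmul = (\<lambda>d. smul), gact = (\<lambda>d n x a. x * a) \<rparr>"

definition gshift :: "('k, 'a, 'm) gmod \<Rightarrow> int \<Rightarrow> ('k, 'a, 'm) gmod" where
  "gshift M s =
     \<lparr> gcomp = (\<lambda>d. gcomp M (d + s)), gadd = (\<lambda>d. gadd M (d + s)),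
       gzero = (\<lambda>d. gzero M (d + s)), gsmul = (\<lambda>d. gsmul M (d + s)),
       gact = (\<lambda>d. gact M (d + s)) \<rparr>"

definition gtrunc_comp :: "('k, 'a, 'm) gmod \<Rightarrow> int \<Rightarrow> int \<Rightarrow> 'm set" where
  "gtrunc_comp M n d = (if n \<le> d then gcomp M d else {gzero M d})"

definition gtrunc :: "('k, 'a, 'm) gmod \<Rightarrow> int \<Rightarrow> ('k, 'a, 'm) gmod" where
  "gtrunc M n = M \<lparr> gcomp := gtrunc_comp M n \<rparr>"

definition gcoset :: "('k, 'a, 'm) gmod \<Rightarrow> (int \<Rightarrow> 'm set) \<Rightarrow> int \<Rightarrow> 'm \<Rightarrow> 'm set" where
  "gcoset M S d x = {gadd M d x s | s. s \<in> S d}"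

definition rep :: "'m set \<Rightarrow> 'm" where
  "rep X = (SOME x. x \<in> X)"

definition gquot :: "('k, 'a, 'm) gmod \<Rightarrow> (int \<Rightarrow> 'm set) \<Rightarrow> ('k, 'a, 'm set) gmod" where
  "gquot M S =
     \<lparr> gcomp = (\<lambda>d. gcoset M S d ` gcomp M d),
       gadd = (\<lambda>d X Y. gcoset M S d (gadd M d (rep X) (rep Y))),
       gzero = (\<lambda>d. gcoset M S d (gzero M d)),
       gsmul = (\<lambda>d c X. gcoset M S d (gsmul M d c (rep X))),
       gact = (\<lambda>d n X a. gcoset M S (d + int n) (gact M d n (rep X) a)) \<rparr>"

text \<open>Graded dual of a graded left module: D(M)_d = Hom_k(M_{-d}, k)
  (k-linear functionals on M_{-d}, extended by 0 outside M_{-d}),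
  with the right action (phi.a)(x) = phi(a.x).\<close>
definition lin_functional :: "('k::field, 'a, 'm) gmod \<Rightarrow> int \<Rightarrow> ('m \<Rightarrow> 'k) \<Rightarrow> bool" where
  "lin_functional M e phi \<longleftrightarrow>
     (\<forall>x\<in>gcomp M e. \<forall>y\<in>gcomp M e. phi (gadd M e x y) = phi x + phi y) \<and>
     (\<forall>c. \<forall>x\<in>gcomp M e. phi (gsmul M e c x) = c * phi x) \<and>
     (\<forall>x. x \<notin> gcomp M e \<longrightarrow> phi x = 0)"

definition gdual :: "('k::field, 'a, 'm) gmod \<Rightarrow> ('k, 'a, 'm \<Rightarrow> 'k) gmod" where
  "gdual M =
     \<lparr> gcomp = (\<lambda>d. {phi. lin_functional M (- d) phi}),
       gadd = (\<lambda>d phi psi x. phi x + psi x),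
       gzero = (\<lambda>d x. 0),
       gsmul = (\<lambda>d c phi x. c * phi x),
       gact = (\<lambda>d n phi a x. if x \<in> gcomp M (- d - int n)
                               then phi (gact M (- d - int n) n x a) else 0) \<rparr>"

definition gmod_iso ::
  "(nat \<Rightarrow> 'a set) \<Rightarrow> ('k, 'a, 'm) gmod \<Rightarrow> ('k, 'a, 'n) gmod \<Rightarrow> bool" where
  "gmod_iso Ag M N \<longleftrightarrow> (\<exists>f :: int \<Rightarrow> 'm \<Rightarrow> 'n.
     \<forall>d. bij_betw (f d) (gcomp M d) (gcomp N d) \<and>
         (\<forall>x\<in>gcomp M d. \<forall>y\<in>gcomp M d. f d (gadd M d x y) = gadd N d (f d x) (f d y)) \<and>
         (\<forall>c. \<forall>x\<in>gcomp M d. f d (gsmul M d c x) = gsmul N d c (f d x)) \<and>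
         (\<forall>n a. \<forall>x\<in>gcomp M d. a \<in> Ag n \<longrightarrow>
              f (d + int n) (gact M d n x a) = gact N d n (f d x) a))"

text \<open>A is graded Frobenius of Gorenstein parameter -l iff it is locally finite and
  D(A) \<cong> A(l) as graded right A-modules (A regarded as a graded left module when dualised).\<close>
definition graded_frobenius ::
  "('k::field \<Rightarrow> 'a::ring_1 \<Rightarrow> 'a) \<Rightarrow> (nat \<Rightarrow> 'a set) \<Rightarrow> int \<Rightarrow> bool" where
  "graded_frobenius smul Ag l \<longleftrightarrow>
     locally_finite smul Ag \<and>
     gmod_iso Ag (gdual (regular_left smul Ag)) (gshift (regular_right smul Ag) l)"

end

theory Submission
  imports Defs
begin

text \<open>For d \<le> 0 the degree-d part of D(A_{\<ge>i}(i)) is D(A)_{d-i}, which the Frobenius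
  isomorphism identifies with A_{d-i+l}; this is also the degree-d part of
  A(l-i)/A(l-i)_{\<ge>1}, whose cosets are singletons in these degrees. For d \<ge> 1 both sides
  vanish: A_{\<ge>i}(i) lives in degrees \<ge> 0, and every element of A(l-i) of positive
  degree lies in A(l-i)_{\<ge>1}. Compatibility with the action is inherited from the
  Frobenius isomorphism whenever the target degree is \<le> 0 and is automatic otherwise.\<close>

lemma Agi_closed:
  fixes smul :: "'k::field \<Rightarrow> 'a::ring_1 \<Rightarrow> 'a"
  assumes "graded_algebra smul Ag"
  shows Agi_zero: "0 \<in> Agi Ag m"
    and Agi_add: "x \<in> Agi Ag m \<Longrightarrow> y \<in> Agi Ag m \<Longrightarrow> x + y \<in> Agi Ag m"
    and Agi_diff: "x \<in> Agi Ag m \<Longrightarrow> y \<in> Agi Ag m \<Longrightarrow> x - y \<in> Agi Ag m"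
    and Agi_smul: "x \<in> Agi Ag m \<Longrightarrow> smul c x \<in> Agi Ag m"
    and Agi_mult: "x \<in> Agi Ag m \<Longrightarrow> a \<in> Ag n \<Longrightarrow> x * a \<in> Agi Ag (m + int n)"
proof -
  have "module smul" and sub: "\<And>n. module.subspace smul (Ag n)"
    and mult: "\<And>m n x y. x \<in> Ag m \<Longrightarrow> y \<in> Ag n \<Longrightarrow> x * y \<in> Ag (m + n)"
    using assms by (auto simp: graded_algebra_def vector_space_def module_def)
  then have zero: "\<And>n. 0 \<in> Ag n" by (simp add: module.subspace_def)
  show "0 \<in> Agi Ag m"
    using zero by (simp add: Agi_def)
  show "x \<in> Agi Ag m \<Longrightarrow> y \<in> Agi Ag m \<Longrightarrow> x + y \<in> Agi Ag m"
    using sub \<open>module smul\<close> by (auto simp: Agi_def module.subspace_def split: if_splits)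
  show "x \<in> Agi Ag m \<Longrightarrow> y \<in> Agi Ag m \<Longrightarrow> x - y \<in> Agi Ag m"
    using sub \<open>module smul\<close> by (auto simp: Agi_def module.subspace_diff split: if_splits)
  show "x \<in> Agi Ag m \<Longrightarrow> smul c x \<in> Agi Ag m"
    using sub \<open>module smul\<close>
    by (auto simp: Agi_def module.subspace_def module.scale_zero_right split: if_splits)
  show "x \<in> Agi Ag m \<Longrightarrow> a \<in> Ag n \<Longrightarrow> x * a \<in> Agi Ag (m + int n)"
  proof (cases "m < 0")
    case True
    then show "x \<in> Agi Ag m \<Longrightarrow> ?thesis" using zero by (simp add: Agi_def)
  next
    case False
    moreover have "nat (m + int n) = nat m + n" using False by simp
    ultimately show "x \<in> Agi Ag m \<Longrightarrow> a \<in> Ag n \<Longrightarrow> ?thesis"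
      using mult by (simp add: Agi_def)
  qed
qed

lemma rep_singleton [simp]: "rep {x} = x"
  by (simp add: rep_def)

lemma rep_Agi:
  assumes "graded_algebra smul Ag"
  shows "rep (Agi Ag m) \<in> Agi Ag m"
  unfolding rep_def using Agi_zero[OF assms] by (rule someI)

lemma lin_functional_singleton_iff:
  assumes "gcomp M e = {z}" and "gadd M e z z = z"
  shows "lin_functional M e phi \<longleftrightarrow> phi = (\<lambda>x. 0)"
proof
  assume phi: "lin_functional M e phi"
  then have "phi z = phi z + phi z" and "\<And>x. x \<noteq> z \<Longrightarrow> phi x = 0"
    using assms by (auto simp: lin_functional_def)
  then show "phi = (\<lambda>x. 0)"
    by (metis add_cancel_right_right)
qed (use assms in \<open>simp add: lin_functional_def\<close>)

lemma gcomp_gdual_shift_trunc_nonpos: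
  assumes "d \<le> 0"
  shows "gcomp (gdual (gshift (gtrunc (regular_left smul Ag) (int i)) (int i))) d
       = gcomp (gdual (regular_left smul Ag)) (d - int i)"
  using assms
  by (simp add: gdual_def lin_functional_def gshift_def gtrunc_def gtrunc_comp_def
      regular_left_def)

lemma gcomp_gdual_shift_trunc_pos:
  assumes "1 \<le> d"
  shows "gcomp (gdual (gshift (gtrunc (regular_left smul Ag) (int i)) (int i))) d = {\<lambda>x. 0}"
proof -
  let ?M = "gshift (gtrunc (regular_left smul Ag) (int i)) (int i)"
  have "gcomp ?M (- d) = {0}" and "gadd ?M (- d) 0 0 = 0"
    using assms by (simp_all add: gshift_def gtrunc_def gtrunc_comp_def regular_left_def)
  then have "lin_functional ?M (- d) phi \<longleftrightarrow> phi = (\<lambda>x. 0)" for phi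
    by (rule lin_functional_singleton_iff)
  then show ?thesis
    by (auto simp: gdual_def)
qed

lemma gact_gdual_shift_trunc:
  assumes "d + int n \<le> 0"
  shows "gact (gdual (gshift (gtrunc (regular_left smul Ag) (int i)) (int i))) d n phi a
       = gact (gdual (regular_left smul Ag)) (d - int i) n phi a"
  using assms
  by (simp add: gdual_def gshift_def gtrunc_def gtrunc_comp_def regular_left_def algebra_simps
      cong: if_cong)

lemma gcoset_trunc_one_nonpos:
  assumes "d \<le> 0"
  shows "gcoset (gshift (regular_right smul Ag) s)
           (gtrunc_comp (gshift (regular_right smul Ag) s) 1) d x = {x}"
  using assms
  by (simp add: gcoset_def gtrunc_comp_def gshift_def regular_right_def)

lemma gcoset_trunc_one_pos:
  assumes "graded_algebra smul Ag" and "1 \<le> d" and x: "x \<in> Agi Ag (d + s)"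
  shows "gcoset (gshift (regular_right smul Ag) s)
           (gtrunc_comp (gshift (regular_right smul Ag) s) 1) d x = Agi Ag (d + s)"
proof -
  have "gcoset (gshift (regular_right smul Ag) s)
           (gtrunc_comp (gshift (regular_right smul Ag) s) 1) d x
      = {x + y | y. y \<in> Agi Ag (d + s)}"
    using assms(2) by (simp add: gcoset_def gtrunc_comp_def gshift_def regular_right_def)
  also have "\<dots> = Agi Ag (d + s)"
  proof (intro equalityI subsetI)
    fix z assume "z \<in> Agi Ag (d + s)"
    then have "z = x + (z - x)" and "z - x \<in> Agi Ag (d + s)"
      using Agi_diff[OF assms(1) _ x] by auto
    then show "z \<in> {x + y | y. y \<in> Agi Ag (d + s)}" by blast
  qed (use Agi_add[OF assms(1) x] in auto)
  finally show ?thesis .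
qed

lemma gcomp_gquot:
  "gcomp (gquot M S) d = gcoset M S d ` gcomp M d"
  by (simp add: gquot_def)

lemma gcomp_gquot_trunc_one_nonpos:
  assumes "d \<le> 0"
  shows "gcomp (gquot (gshift (regular_right smul Ag) s)
                 (gtrunc_comp (gshift (regular_right smul Ag) s) 1)) d
       = (\<lambda>x. {x}) ` Agi Ag (d + s)"
  unfolding gcomp_gquot gcoset_trunc_one_nonpos[OF assms]
  by (simp add: gshift_def regular_right_def)

lemma gcomp_gquot_trunc_one_pos:
  assumes "graded_algebra smul Ag" and "1 \<le> d"
  shows "gcomp (gquot (gshift (regular_right smul Ag) s)
                 (gtrunc_comp (gshift (regular_right smul Ag) s) 1)) d
       = {Agi Ag (d + s)}"
proof -
  have "gcomp (gshift (regular_right smul Ag) s) d = Agi Ag (d + s)"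
    by (simp add: gshift_def regular_right_def)
  then show ?thesis
    unfolding gcomp_gquot
    using gcoset_trunc_one_pos[OF assms] Agi_zero[OF assms(1), of "d + s"] by auto
qed

lemma gquot_shift_regular_right_ops:
  "gadd (gquot (gshift (regular_right smul Ag) s) S) d X Y
     = gcoset (gshift (regular_right smul Ag) s) S d (rep X + rep Y)"
  "gsmul (gquot (gshift (regular_right smul Ag) s) S) d c X
     = gcoset (gshift (regular_right smul Ag) s) S d (smul c (rep X))"
  "gact (gquot (gshift (regular_right smul Ag) s) S) d n X a
     = gcoset (gshift (regular_right smul Ag) s) S (d + int n) (rep X * a)"
  by (simp_all add: gquot_def gshift_def regular_right_def)

lemma gdual_ops:
  "gadd (gdual M) d = (\<lambda>phi psi x. phi x + psi x)"
  "gsmul (gdual M) d = (\<lambda>c phi x. c * phi x)"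
  by (simp_all add: gdual_def)

lemma gmod_iso_dual_regular_leftE:
  assumes "gmod_iso Ag (gdual (regular_left smul Ag)) (gshift (regular_right smul Ag) l)"
  obtains g where
    "\<And>d. bij_betw (g d) (gcomp (gdual (regular_left smul Ag)) d) (Agi Ag (d + l))"
    "\<And>d phi psi. phi \<in> gcomp (gdual (regular_left smul Ag)) d \<Longrightarrow>
       psi \<in> gcomp (gdual (regular_left smul Ag)) d \<Longrightarrow>
       g d (\<lambda>x. phi x + psi x) = g d phi + g d psi"
    "\<And>d c phi. phi \<in> gcomp (gdual (regular_left smul Ag)) d \<Longrightarrow>
       g d (\<lambda>x. c * phi x) = smul c (g d phi)"
    "\<And>d n a phi. phi \<in> gcomp (gdual (regular_left smul Ag)) d \<Longrightarrow> a \<in> Ag n \<Longrightarrow>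
       g (d + int n) (gact (gdual (regular_left smul Ag)) d n phi a) = g d phi * a"
  using assms that unfolding gmod_iso_def gdual_ops
  by (simp add: gshift_def regular_right_def) blast

definition dual_trunc_to_quot ::
  "(int \<Rightarrow> ('a \<Rightarrow> 'k) \<Rightarrow> 'a) \<Rightarrow> (nat \<Rightarrow> 'a::zero set) \<Rightarrow> int \<Rightarrow> nat \<Rightarrow>
     int \<Rightarrow> ('a \<Rightarrow> 'k) \<Rightarrow> 'a set"
  where "dual_trunc_to_quot g Ag l i d phi =
           (if d \<le> 0 then {g (d - int i) phi} else Agi Ag (d + (l - int i)))"

context
  fixes smul :: "'k::field \<Rightarrow> 'a::ring_1 \<Rightarrow> 'a"
    and Ag :: "nat \<Rightarrow> 'a set"
    and l :: int
    and i :: nat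
    and g :: "int \<Rightarrow> ('a \<Rightarrow> 'k) \<Rightarrow> 'a"
  assumes graded: "graded_algebra smul Ag"
    and g_bij: "\<And>d. bij_betw (g d) (gcomp (gdual (regular_left smul Ag)) d) (Agi Ag (d + l))"
    and g_add: "\<And>d phi psi. phi \<in> gcomp (gdual (regular_left smul Ag)) d \<Longrightarrow>
                  psi \<in> gcomp (gdual (regular_left smul Ag)) d \<Longrightarrow>
                  g d (\<lambda>x. phi x + psi x) = g d phi + g d psi"
    and g_smul: "\<And>d c phi. phi \<in> gcomp (gdual (regular_left smul Ag)) d \<Longrightarrow>
                  g d (\<lambda>x. c * phi x) = smul c (g d phi)"
    and g_act: "\<And>d n a phi. phi \<in> gcomp (gdual (regular_left smul Ag)) d \<Longrightarrow> a \<in> Ag n \<Longrightarrow>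
                  g (d + int n) (gact (gdual (regular_left smul Ag)) d n phi a) = g d phi * a"
begin

abbreviation dual_trunc :: "('k, 'a, 'a \<Rightarrow> 'k) gmod" where
  "dual_trunc \<equiv> gdual (gshift (gtrunc (regular_left smul Ag) (int i)) (int i))"

abbreviation quot_trunc :: "('k, 'a, 'a set) gmod" where
  "quot_trunc \<equiv> gquot (gshift (regular_right smul Ag) (l - int i))
                   (gtrunc_comp (gshift (regular_right smul Ag) (l - int i)) 1)"

lemma bij_dual_trunc_to_quot:
  "bij_betw (dual_trunc_to_quot g Ag l i d) (gcomp dual_trunc d) (gcomp quot_trunc d)"
proof (cases "d \<le> 0")
  case True
  have "bij_betw (g (d - int i)) (gcomp dual_trunc d) (Agi Ag (d + (l - int i)))"
    using g_bij[of "d - int i"] by (simp add: gcomp_gdual_shift_trunc_nonpos[OF True] algebra_simps)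
  moreover have "bij_betw (\<lambda>x. {x}) (Agi Ag (d + (l - int i))) (gcomp quot_trunc d)"
    unfolding gcomp_gquot_trunc_one_nonpos[OF True] by (rule inj_on_imp_bij_betw) simp
  ultimately have "bij_betw ((\<lambda>x. {x}) \<circ> g (d - int i)) (gcomp dual_trunc d) (gcomp quot_trunc d)"
    by (rule bij_betw_trans)
  then show ?thesis
    using True by (simp add: dual_trunc_to_quot_def[abs_def] comp_def)
next
  case False
  then have "1 \<le> d" by simp
  with False show ?thesis
    by (simp add: gcomp_gdual_shift_trunc_pos gcomp_gquot_trunc_one_pos[OF graded]
        dual_trunc_to_quot_def[abs_def] bij_betw_def)
qed

lemma dual_trunc_to_quot_add:
  assumes "phi \<in> gcomp dual_trunc d" and "psi \<in> gcomp dual_trunc d"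
  shows "dual_trunc_to_quot g Ag l i d (gadd dual_trunc d phi psi)
       = gadd quot_trunc d (dual_trunc_to_quot g Ag l i d phi) (dual_trunc_to_quot g Ag l i d psi)"
proof (cases "d \<le> 0")
  case True
  then have "g (d - int i) (\<lambda>x. phi x + psi x) = g (d - int i) phi + g (d - int i) psi"
    using assms by (intro g_add) (simp_all add: gcomp_gdual_shift_trunc_nonpos)
  with True show ?thesis
    by (simp add: dual_trunc_to_quot_def gdual_def gquot_shift_regular_right_ops
        gcoset_trunc_one_nonpos)
next
  case False
  then show ?thesis
    using gcoset_trunc_one_pos[OF graded] rep_Agi[OF graded] Agi_add[OF graded]
    by (simp add: dual_trunc_to_quot_def gquot_shift_regular_right_ops)
qed

lemma dual_trunc_to_quot_smul:
  assumes "phi \<in> gcomp dual_trunc d"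
  shows "dual_trunc_to_quot g Ag l i d (gsmul dual_trunc d c phi)
       = gsmul quot_trunc d c (dual_trunc_to_quot g Ag l i d phi)"
proof (cases "d \<le> 0")
  case True
  then have "g (d - int i) (\<lambda>x. c * phi x) = smul c (g (d - int i) phi)"
    using assms by (intro g_smul) (simp add: gcomp_gdual_shift_trunc_nonpos)
  with True show ?thesis
    by (simp add: dual_trunc_to_quot_def gdual_def gquot_shift_regular_right_ops
        gcoset_trunc_one_nonpos)
next
  case False
  then show ?thesis
    using gcoset_trunc_one_pos[OF graded] rep_Agi[OF graded] Agi_smul[OF graded]
    by (simp add: dual_trunc_to_quot_def gquot_shift_regular_right_ops)
qed

lemma rep_dual_trunc_to_quot:
  assumes "phi \<in> gcomp dual_trunc d"
  shows "rep (dual_trunc_to_quot g Ag l i d phi) \<in> Agi Ag (d + (l - int i))"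
proof (cases "d \<le> 0")
  case True
  then have "g (d - int i) phi \<in> Agi Ag (d - int i + l)"
    using assms g_bij bij_betwE by (fastforce simp: gcomp_gdual_shift_trunc_nonpos)
  with True show ?thesis
    by (simp add: dual_trunc_to_quot_def algebra_simps)
qed (simp add: dual_trunc_to_quot_def rep_Agi[OF graded])

lemma dual_trunc_to_quot_act:
  assumes phi: "phi \<in> gcomp dual_trunc d" and a: "a \<in> Ag n"
  shows "dual_trunc_to_quot g Ag l i (d + int n) (gact dual_trunc d n phi a)
       = gact quot_trunc d n (dual_trunc_to_quot g Ag l i d phi) a"
proof (cases "d + int n \<le> 0")
  case True
  then have "d \<le> 0" by simp
  then have "phi \<in> gcomp (gdual (regular_left smul Ag)) (d - int i)"
    using phi by (simp add: gcomp_gdual_shift_trunc_nonpos)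
  then have "g (d - int i + int n) (gact (gdual (regular_left smul Ag)) (d - int i) n phi a)
      = g (d - int i) phi * a"
    using a by (rule g_act)
  with True \<open>d \<le> 0\<close> show ?thesis
    by (simp add: dual_trunc_to_quot_def gact_gdual_shift_trunc gquot_shift_regular_right_ops
        gcoset_trunc_one_nonpos algebra_simps)
next
  case False
  have "rep (dual_trunc_to_quot g Ag l i d phi) * a \<in> Agi Ag (d + int n + (l - int i))"
    using Agi_mult[OF graded rep_dual_trunc_to_quot[OF phi] a] by (simp add: algebra_simps)
  with False show ?thesis
    by (simp add: dual_trunc_to_quot_def gquot_shift_regular_right_ops
        gcoset_trunc_one_pos[OF graded])
qed

lemma gmod_iso_dual_trunc_quot: "gmod_iso Ag dual_trunc quot_trunc"
  unfolding gmod_iso_def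
  using bij_dual_trunc_to_quot dual_trunc_to_quot_add dual_trunc_to_quot_smul
    dual_trunc_to_quot_act
  by blast

end

theorem lemma3p10:
  fixes smul :: "'k::field \<Rightarrow> 'a::ring_1 \<Rightarrow> 'a"
    and Ag :: "nat \<Rightarrow> 'a set"
    and l :: int
    and i :: nat
  assumes "alg_closed TYPE('k)" \<comment> \<open>not needed\<close>
    and ga: "graded_algebra smul Ag"
    and fr: "graded_frobenius smul Ag l"
  shows "gmod_iso Ag
           (gdual (gshift (gtrunc (regular_left smul Ag) (int i)) (int i)))
           (gquot (gshift (regular_right smul Ag) (l - int i))
                  (gtrunc_comp (gshift (regular_right smul Ag) (l - int i)) 1))"
proof -
  from fr have "gmod_iso Ag (gdual (regular_left smul Ag)) (gshift (regular_right smul Ag) l)"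
    by (simp add: graded_frobenius_def)
  then show ?thesis
    by (rule gmod_iso_dual_regular_leftE) (rule gmod_iso_dual_trunc_quot[OF ga])
qed

end
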